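(* Let $G$ be a multigraph with unit edge capacities and terminal set ${\mathcal T}\subseteq V(G)$. If $G'$ is a legal contracted graph for $G$, then $G'$ is a quality-$68$ restricted flow sparsifier for $G$.
   Context: For $S\subseteq V$, $\operatorname{out}(S)$ is the set of edges with exactly one endpoint in $S$. $S$ is $\alpha$-well-linked if for every partition $(A,B)$ of $S$, with $T_A=\operatorname{out}(A)\cap\operatorname{out}(S)$, $T_B=\operatorname{out}(B)\cap\operatorname{out}(S)$, $|E(A,B)|\geq\alpha\min\{|T_A|,|T_B|\}$. A flow between edges of $\operatorname{out}(S)$ is contained in $S$ if every flow path has its first and last edge in $\operatorname{out}(S)$ and all other edges in $G[S]$. A set $S\subseteq V\setminus{\mathcal T}$ with $|\operatorname{out}(S)|=z$ is a good router if $S$ is $1/3$-well-linked and every pair of edges $e,e'\in\operatorname{out}(S)$ can simultaneously send $1/z$ flow units to each other by a flow contained in $S$ with congestion at most $34$. $G'$ is a legal contracted graph for $G$ if there is a collection ${\mathcal C}$ of disjoint good routers (containing no terminals) such that $G'$ is obtained from $G$ by contracting each $S\in{\mathcal C}$ into a single vertex (self-loops removed, parallel edges kept). For a demand set $D$ over ${\mathcal T}$ (a nonnegative demand $D(t,t')$ per unordered terminal pair), $\eta(G,D)$ is the minimum congestion of a fractional multicommodity flow in which each pair $t,t'$ exchanges $D(t,t')$ units. $H$ is a quality-$q$ flow sparsifier if ${\mathcal T}\subseteq V(H)$ and $\eta(H,D)\leq\eta(G,D)\leq q\,\eta(H,D)$ for all $D$; it is restricted if it is obtained from $G$ by contracting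 disjoint sets of non-terminal vertices. *)

theory Defs
  imports Complex_Main "HOL-Library.Extended_Nonnegative_Real"
begin

(* A finite undirected multigraph: vertex set V, edge set E (edge identities of
   type 'e, so parallel edges are distinct edges), endpoint map ep; edge e joins
   fst (ep e) and snd (ep e).  Every edge has unit capacity. *)
definition multigraph :: "'v set \<Rightarrow> 'e set \<Rightarrow> ('e \<Rightarrow> 'v \<times> 'v) \<Rightarrow> bool" where
  "multigraph V E ep \<longleftrightarrow> finite V \<and> finite E \<and>
     (\<forall>e\<in>E. fst (ep e) \<in> V \<and> snd (ep e) \<in> V)"

definition out_edges :: "'e set \<Rightarrow> ('e \<Rightarrow> 'v \<times> 'v) \<Rightarrow> 'v set \<Rightarrow> 'e set" where
  "out_edges E ep S = {e \<in> E. (fst (ep e) \<in> S) \<noteq> (snd (ep e) \<in> S)}"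

definition edges_between :: "'e set \<Rightarrow> ('e \<Rightarrow> 'v \<times> 'v) \<Rightarrow> 'v set \<Rightarrow> 'v set \<Rightarrow> 'e set" where
  "edges_between E ep A B = {e \<in> E. (fst (ep e) \<in> A \<and> snd (ep e) \<in> B) \<or>
                                       (fst (ep e) \<in> B \<and> snd (ep e) \<in> A)}"

definition inner_edges :: "'e set \<Rightarrow> ('e \<Rightarrow> 'v \<times> 'v) \<Rightarrow> 'v set \<Rightarrow> 'e set" where
  "inner_edges E ep S = {e \<in> E. fst (ep e) \<in> S \<and> snd (ep e) \<in> S}"

definition well_linked :: "real \<Rightarrow> 'e set \<Rightarrow> ('e \<Rightarrow> 'v \<times> 'v) \<Rightarrow> 'v set \<Rightarrow> bool" where
  "well_linked \<alpha> E ep S \<longleftrightarrow>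
    (\<forall>A B. A \<union> B = S \<and> A \<inter> B = {} \<longrightarrow>
       real (card (edges_between E ep A B)) \<ge>
         \<alpha> * min (real (card (out_edges E ep A \<inter> out_edges E ep S)))
                 (real (card (out_edges E ep B \<inter> out_edges E ep S))))"

(* A flow on a set of edges: g e True is the amount sent along e from fst (ep e)
   to snd (ep e), g e False the amount sent in the opposite direction.
   netout is the net amount leaving vertex v. *)
definition netout :: "'e set \<Rightarrow> ('e \<Rightarrow> 'v \<times> 'v) \<Rightarrow> ('e \<Rightarrow> bool \<Rightarrow> real) \<Rightarrow> 'v \<Rightarrow> real" where
  "netout F ep g v =
     (\<Sum>e\<in>{e\<in>F. fst (ep e) = v}. g e True - g e False) +
     (\<Sum>e\<in>{e\<in>F. snd (ep e) = v}. g e False - g e True)"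

definition inside_end :: "('e \<Rightarrow> 'v \<times> 'v) \<Rightarrow> 'v set \<Rightarrow> 'e \<Rightarrow> 'v" where
  "inside_end ep S e = (if fst (ep e) \<in> S then fst (ep e) else snd (ep e))"

(* Every pair of distinct edges e, e' of out(S) simultaneously exchanges 1/z
   flow units (z = |out(S)|) by a flow contained in S (first and last edge
   e, e', all other edges in G[S]), with total congestion at most c.
   Commodity {a,b}: flow g {a,b} on the edges of G[S] from the inside endpoint
   of a to that of b; each of a, b additionally carries the 1/z units. *)
definition router_flow :: "real \<Rightarrow> 'e set \<Rightarrow> ('e \<Rightarrow> 'v \<times> 'v) \<Rightarrow> 'v set \<Rightarrow> bool" where
  "router_flow c E ep S \<longleftrightarrow>
    (let Out = out_edges E ep S; z = real (card Out); I = inner_edges E ep S;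
         P = {p. p \<subseteq> Out \<and> card p = 2} in
     \<exists>g :: 'e set \<Rightarrow> 'e \<Rightarrow> bool \<Rightarrow> real.
       (\<forall>p\<in>P. \<forall>e\<in>I. \<forall>d. g p e d \<ge> 0) \<and>
       (\<forall>p\<in>P. \<exists>a b. p = {a, b} \<and> a \<noteq> b \<and>
           (\<forall>v\<in>S. netout I ep (g p) v =
               (if v = inside_end ep S a then 1 / z else 0) -
               (if v = inside_end ep S b then 1 / z else 0))) \<and>
       (\<forall>e\<in>I. (\<Sum>p\<in>P. g p e True + g p e False) \<le> c) \<and>
       (\<forall>e\<in>Out. (\<Sum>p\<in>{p\<in>P. e \<in> p}. 1 / z) \<le> c))"

definition good_router :: "'v set \<Rightarrow> 'e set \<Rightarrow> ('e \<Rightarrow> 'v \<times> 'v) \<Rightarrow> 'v set \<Rightarrow> 'v set \<Rightarrow> bool" where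
  "good_router V E ep T S \<longleftrightarrow> S \<subseteq> V - T \<and> well_linked (1/3) E ep S \<and> router_flow 34 E ep S"

definition cls :: "'v set set \<Rightarrow> 'v \<Rightarrow> 'v set" where
  "cls C v = (if \<exists>S\<in>C. v \<in> S then (THE S. S \<in> C \<and> v \<in> S) else {v})"

definition contr_V :: "'v set set \<Rightarrow> 'v set \<Rightarrow> 'v set set" where
  "contr_V C V = cls C ` V"

(* self-loops removed, parallel edges kept *)
definition contr_E :: "'v set set \<Rightarrow> 'e set \<Rightarrow> ('e \<Rightarrow> 'v \<times> 'v) \<Rightarrow> 'e set" where
  "contr_E C E ep = {e \<in> E. cls C (fst (ep e)) \<noteq> cls C (snd (ep e))}"

definition contr_ep :: "'v set set \<Rightarrow> ('e \<Rightarrow> 'v \<times> 'v) \<Rightarrow> 'e \<Rightarrow> 'v set \<times> 'v set" where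
  "contr_ep C ep e = (cls C (fst (ep e)), cls C (snd (ep e)))"

definition pairwise_disjoint :: "'v set set \<Rightarrow> bool" where
  "pairwise_disjoint C \<longleftrightarrow> (\<forall>S\<in>C. \<forall>S'\<in>C. S \<noteq> S' \<longrightarrow> S \<inter> S' = {})"

definition legal_contracted :: "'v set \<Rightarrow> 'e set \<Rightarrow> ('e \<Rightarrow> 'v \<times> 'v) \<Rightarrow> 'v set \<Rightarrow>
    'v set set \<Rightarrow> 'e set \<Rightarrow> ('e \<Rightarrow> 'v set \<times> 'v set) \<Rightarrow> bool" where
  "legal_contracted V E ep T V' E' ep' \<longleftrightarrow>
    (\<exists>C. pairwise_disjoint C \<and> (\<forall>S\<in>C. good_router V E ep T S) \<and>
         V' = contr_V C V \<and> E' = contr_E C E ep \<and> (\<forall>e\<in>E'. ep' e = contr_ep C ep e))"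

(* A demand set D assigns D p \<ge> 0 to each unordered pair
   p = {t,t'} of distinct terminals.  The terminal t sits at vertex \<iota> t of the
   graph (V,E,ep).  routable: every pair exchanges D p units, with edge loads
   (unit capacities) at most c. *)
definition routable :: "'w set \<Rightarrow> 'e set \<Rightarrow> ('e \<Rightarrow> 'w \<times> 'w) \<Rightarrow> 'v set \<Rightarrow> ('v \<Rightarrow> 'w) \<Rightarrow>
    ('v set \<Rightarrow> real) \<Rightarrow> real \<Rightarrow> bool" where
  "routable V E ep T \<iota> D c \<longleftrightarrow>
    (let P = {p. p \<subseteq> T \<and> card p = 2} in
     \<exists>g :: 'v set \<Rightarrow> 'e \<Rightarrow> bool \<Rightarrow> real.
       (\<forall>p\<in>P. \<forall>e\<in>E. \<forall>d. g p e d \<ge> 0) \<and>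
       (\<forall>p\<in>P. \<exists>a b. p = {a, b} \<and> a \<noteq> b \<and>
           (\<forall>v\<in>V. netout E ep (g p) v =
               (if v = \<iota> a then D p else 0) - (if v = \<iota> b then D p else 0))) \<and>
       (\<forall>e\<in>E. (\<Sum>p\<in>P. g p e True + g p e False) \<le> c))"

(* eta: minimum congestion (infinity if the demands cannot be routed at all) *)
definition eta :: "'w set \<Rightarrow> 'e set \<Rightarrow> ('e \<Rightarrow> 'w \<times> 'w) \<Rightarrow> 'v set \<Rightarrow> ('v \<Rightarrow> 'w) \<Rightarrow>
    ('v set \<Rightarrow> real) \<Rightarrow> ennreal" where
  "eta V E ep T \<iota> D = (INF c \<in> {c. c \<ge> 0 \<and> routable V E ep T \<iota> D c}. ennreal c)"

definition flow_sparsifier :: "'v set \<Rightarrow> 'e set \<Rightarrow> ('e \<Rightarrow> 'v \<times> 'v) \<Rightarrow> 'v set \<Rightarrow>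
    'w set \<Rightarrow> 'f set \<Rightarrow> ('f \<Rightarrow> 'w \<times> 'w) \<Rightarrow> ('v \<Rightarrow> 'w) \<Rightarrow> ennreal \<Rightarrow> bool" where
  "flow_sparsifier V E ep T VH EH epH \<iota> q \<longleftrightarrow>
    inj_on \<iota> T \<and> \<iota> ` T \<subseteq> VH \<and>
    (\<forall>D. (\<forall>p. D p \<ge> 0) \<longrightarrow>
       eta VH EH epH T \<iota> D \<le> eta V E ep T id D \<and>
       eta V E ep T id D \<le> q * eta VH EH epH T \<iota> D)"

(* restricted: H arises from G by contracting disjoint sets of non-terminals;
   terminals t of G are the vertices {t} of H *)
definition restricted_flow_sparsifier :: "'v set \<Rightarrow> 'e set \<Rightarrow> ('e \<Rightarrow> 'v \<times> 'v) \<Rightarrow> 'v set \<Rightarrow>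
    'v set set \<Rightarrow> 'e set \<Rightarrow> ('e \<Rightarrow> 'v set \<times> 'v set) \<Rightarrow> ennreal \<Rightarrow> bool" where
  "restricted_flow_sparsifier V E ep T VH EH epH q \<longleftrightarrow>
    (\<exists>C. pairwise_disjoint C \<and> (\<forall>S\<in>C. S \<subseteq> V - T) \<and>
         VH = contr_V C V \<and> EH = contr_E C E ep \<and> (\<forall>e\<in>EH. epH e = contr_ep C ep e) \<and>
         flow_sparsifier V E ep T VH EH epH (cls C) q)"

end

theory Submission
  imports Defs
begin

(* Contracting vertex sets only helps routing: a flow in G projects to a flow in G' with the same
   edge loads, so eta(G') <= eta(G).  Conversely, a routing of G' with congestion c is kept on the
   edges of G' and completed inside each contracted router S.  The flow it carries across the
   boundary of S is balanced (S contains no terminals) and is at most c on each boundary edge, so it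
   is a combination of the router's unit commodities between pairs of boundary edges with total
   weight at most 2c per pair; as the router flow has congestion 34, the edges inside S then carry
   at most 68c. *)

definition edge_flow :: "('e \<Rightarrow> bool \<Rightarrow> real) \<Rightarrow> 'e \<Rightarrow> real" where
  "edge_flow g e = g e True - g e False"

definition incidence :: "('e \<Rightarrow> 'v \<times> 'v) \<Rightarrow> 'v \<Rightarrow> 'e \<Rightarrow> real" where
  "incidence ep v e = (if fst (ep e) = v then 1 else 0) - (if snd (ep e) = v then 1 else 0)"

lemma incidence_eq_0_iff: "incidence ep v e = 0 \<longleftrightarrow> (fst (ep e) = v \<longleftrightarrow> snd (ep e) = v)"
  unfolding incidence_def by auto

lemma netout_eq_sum_incidence:
  assumes "finite F"
  shows "netout F ep g v = (\<Sum>e\<in>F. edge_flow g e * incidence ep v e)"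
proof -
  have "netout F ep g v = (\<Sum>e\<in>F. if fst (ep e) = v then g e True - g e False else 0) +
      (\<Sum>e\<in>F. if snd (ep e) = v then g e False - g e True else 0)"
    unfolding netout_def using assms by (simp add: sum.inter_filter)
  also have "\<dots> = (\<Sum>e\<in>F. edge_flow g e * incidence ep v e)"
    by (subst sum.distrib[symmetric]) (auto intro!: sum.cong simp: edge_flow_def incidence_def)
  finally show ?thesis .
qed

lemma netout_cong:
  assumes "\<And>e d. e \<in> F \<Longrightarrow> g e d = g' e d"
  shows "netout F ep g v = netout F ep g' v"
  unfolding netout_def using assms by (intro arg_cong2[where f = "(+)"] sum.cong) auto

lemma netout_cong_endpoints:
  assumes "\<And>e. e \<in> F \<Longrightarrow> ep e = ep' e"
  shows "netout F ep g v = netout F ep' g v"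
  unfolding netout_def using assms by (intro arg_cong2[where f = "(+)"] sum.cong) auto

lemma netout_subset:
  assumes "finite F" "F' \<subseteq> F" "\<And>e. e \<in> F - F' \<Longrightarrow> incidence ep v e = 0"
  shows "netout F ep g v = netout F' ep g v"
  using assms finite_subset[OF assms(2,1)]
  by (simp add: netout_eq_sum_incidence sum.mono_neutral_right)

lemma netout_Un:
  assumes "finite F1" "finite F2" "F1 \<inter> F2 = {}"
  shows "netout (F1 \<union> F2) ep g v = netout F1 ep g v + netout F2 ep g v"
  using assms by (simp add: netout_eq_sum_incidence sum.union_disjoint)

lemma netout_split_out_inner:
  assumes "finite E" "v \<in> S"
  shows "netout E ep g v = netout (out_edges E ep S) ep g v + netout (inner_edges E ep S) ep g v"
proof -
  have "netout E ep g v = netout (out_edges E ep S \<union> inner_edges E ep S) ep g v"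
    using assms by (intro netout_subset) (auto simp: out_edges_def inner_edges_def incidence_def)
  also have "\<dots> = netout (out_edges E ep S) ep g v + netout (inner_edges E ep S) ep g v"
    using assms by (intro netout_Un) (auto simp: out_edges_def inner_edges_def)
  finally show ?thesis .
qed

definition exit_flow :: "('e \<Rightarrow> 'v \<times> 'v) \<Rightarrow> 'v set \<Rightarrow> ('e \<Rightarrow> bool \<Rightarrow> real) \<Rightarrow> 'e \<Rightarrow> real" where
  "exit_flow ep S g e = (if fst (ep e) \<in> S then edge_flow g e else - edge_flow g e)"

lemma abs_exit_flow_le:
  "g e True \<ge> 0 \<Longrightarrow> g e False \<ge> 0 \<Longrightarrow> \<bar>exit_flow ep S g e\<bar> \<le> g e True + g e False"
  unfolding exit_flow_def edge_flow_def by auto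

lemma netout_out_edges:
  assumes "finite E" "v \<in> S"
  shows "netout (out_edges E ep S) ep g v =
    (\<Sum>e\<in>{e \<in> out_edges E ep S. inside_end ep S e = v}. exit_flow ep S g e)"
proof -
  have "finite (out_edges E ep S)"
    using assms by (simp add: out_edges_def)
  moreover have "edge_flow g e * incidence ep v e = (if inside_end ep S e = v then exit_flow ep S g e else 0)"
    if "e \<in> out_edges E ep S" for e
    using that \<open>v \<in> S\<close> by (auto simp: out_edges_def inside_end_def exit_flow_def incidence_def)
  ultimately show ?thesis
    by (simp add: netout_eq_sum_incidence sum.inter_filter)
qed

lemma netout_quotient:
  fixes \<pi> :: "'v \<Rightarrow> 'w"
  assumes "finite V" "finite E" and ends: "\<And>e. e \<in> E \<Longrightarrow> fst (ep e) \<in> V \<and> snd (ep e) \<in> V"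
    and "E' \<subseteq> E" and "\<And>e. e \<in> E - E' \<Longrightarrow> \<pi> (fst (ep e)) = \<pi> (snd (ep e))"
    and epH: "\<And>e. e \<in> E' \<Longrightarrow> epH e = (\<pi> (fst (ep e)), \<pi> (snd (ep e)))"
  shows "netout E' epH g W = (\<Sum>v\<in>{v\<in>V. \<pi> v = W}. netout E ep g v)"
proof -
  let ?fibre = "{v\<in>V. \<pi> v = W}"
  let ?ep\<pi> = "\<lambda>e. (\<pi> (fst (ep e)), \<pi> (snd (ep e)))"
  have fibre_incidence: "incidence ?ep\<pi> W e = (\<Sum>v\<in>?fibre. incidence ep v e)" if "e \<in> E" for e
    using that ends \<open>finite V\<close> by (simp add: incidence_def sum_subtractf)
  have "netout E' epH g W = netout E' ?ep\<pi> g W"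
    using epH by (rule netout_cong_endpoints)
  also have "\<dots> = netout E ?ep\<pi> g W"
    using assms by (intro netout_subset[symmetric]) (auto simp: incidence_def)
  also have "\<dots> = (\<Sum>e\<in>E. \<Sum>v\<in>?fibre. edge_flow g e * incidence ep v e)"
    using \<open>finite E\<close> by (simp add: netout_eq_sum_incidence fibre_incidence sum_distrib_left)
  also have "\<dots> = (\<Sum>v\<in>?fibre. netout E ep g v)"
    using \<open>finite E\<close> by (simp add: netout_eq_sum_incidence sum.swap[of _ E])
  finally show ?thesis .
qed

section \<open>Routings and contraction\<close>

definition pairs_of :: "'a set \<Rightarrow> 'a set set" where
  "pairs_of X = {p. p \<subseteq> X \<and> card p = 2}"

definition routing :: "'w set \<Rightarrow> 'e set \<Rightarrow> ('e \<Rightarrow> 'w \<times> 'w) \<Rightarrow> 'v set \<Rightarrow> ('v \<Rightarrow> 'w) \<Rightarrow>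
    ('v set \<Rightarrow> real) \<Rightarrow> real \<Rightarrow> ('v set \<Rightarrow> 'e \<Rightarrow> bool \<Rightarrow> real) \<Rightarrow> bool" where
  "routing V E ep T \<iota> D c g \<longleftrightarrow>
    (\<forall>p\<in>pairs_of T. \<forall>e\<in>E. \<forall>d. g p e d \<ge> 0) \<and>
    (\<forall>p\<in>pairs_of T. \<exists>a b. p = {a, b} \<and> a \<noteq> b \<and>
       (\<forall>v\<in>V. netout E ep (g p) v = (if v = \<iota> a then D p else 0) - (if v = \<iota> b then D p else 0))) \<and>
    (\<forall>e\<in>E. (\<Sum>p\<in>pairs_of T. g p e True + g p e False) \<le> c)"

lemma routable_iff_routing: "routable V E ep T \<iota> D c \<longleftrightarrow> (\<exists>g. routing V E ep T \<iota> D c g)"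
  unfolding routable_def routing_def pairs_of_def Let_def ..

lemma routing_nonneg: "routing V E ep T \<iota> D c g \<Longrightarrow> p \<in> pairs_of T \<Longrightarrow> e \<in> E \<Longrightarrow> g p e d \<ge> 0"
  unfolding routing_def by simp

lemma routing_load:
  "routing V E ep T \<iota> D c g \<Longrightarrow> e \<in> E \<Longrightarrow> (\<Sum>p\<in>pairs_of T. g p e True + g p e False) \<le> c"
  unfolding routing_def by simp

lemma routing_conserve:
  assumes "routing V E ep T \<iota> D c g" "p \<in> pairs_of T"
  obtains a b where "p = {a, b}" "a \<noteq> b"
    "\<And>v. v \<in> V \<Longrightarrow> netout E ep (g p) v = (if v = \<iota> a then D p else 0) - (if v = \<iota> b then D p else 0)"
  using assms unfolding routing_def by meson

lemma routing_quotient: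
  fixes \<pi> :: "'v \<Rightarrow> 'w"
  assumes "finite V" "finite E" and ends: "\<And>e. e \<in> E \<Longrightarrow> fst (ep e) \<in> V \<and> snd (ep e) \<in> V"
    and "E' \<subseteq> E" and "\<And>e. e \<in> E - E' \<Longrightarrow> \<pi> (fst (ep e)) = \<pi> (snd (ep e))"
    and "\<And>e. e \<in> E' \<Longrightarrow> epH e = (\<pi> (fst (ep e)), \<pi> (snd (ep e)))"
    and "T \<subseteq> V" and g: "routing V E ep T id D c g"
  shows "routing (\<pi> ` V) E' epH T \<pi> D c g"
  unfolding routing_def
proof (intro conjI ballI)
  fix p assume p: "p \<in> pairs_of T"
  then obtain a b where ab: "p = {a, b}" "a \<noteq> b" and
    conserved: "\<And>v. v \<in> V \<Longrightarrow> netout E ep (g p) v = (if v = a then D p else 0) - (if v = b then D p else 0)"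
    using g unfolding routing_def by auto
  have "a \<in> V" "b \<in> V" using p ab \<open>T \<subseteq> V\<close> by (auto simp: pairs_of_def)
  have "netout E' epH (g p) W = (if W = \<pi> a then D p else 0) - (if W = \<pi> b then D p else 0)" for W
  proof -
    have "netout E' epH (g p) W = (\<Sum>v\<in>{v\<in>V. \<pi> v = W}. netout E ep (g p) v)"
      by (rule netout_quotient) (use assms in auto)
    also have "\<dots> = (\<Sum>v\<in>{v\<in>V. \<pi> v = W}. (if a = v then D p else 0) - (if b = v then D p else 0))"
      using conserved by (intro sum.cong) auto
    also have "\<dots> = (if W = \<pi> a then D p else 0) - (if W = \<pi> b then D p else 0)"
      using \<open>finite V\<close> \<open>a \<in> V\<close> \<open>b \<in> V\<close> by (simp add: sum_subtractf)
    finally show ?thesis .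
  qed
  then show "\<exists>a b. p = {a, b} \<and> a \<noteq> b \<and> (\<forall>W\<in>\<pi> ` V. netout E' epH (g p) W =
      (if W = \<pi> a then D p else 0) - (if W = \<pi> b then D p else 0))"
    using ab by blast
qed (use g \<open>E' \<subseteq> E\<close> in \<open>auto simp: routing_def\<close>)

section \<open>Rerouting inside a router\<close>

definition comb_flow :: "'q set \<Rightarrow> ('q \<Rightarrow> real) \<Rightarrow> ('q \<Rightarrow> 'e \<Rightarrow> bool \<Rightarrow> real) \<Rightarrow> 'e \<Rightarrow> bool \<Rightarrow> real" where
  "comb_flow Q \<kappa> r e d = (\<Sum>q\<in>Q. max (\<kappa> q) 0 * r q e d + max (- \<kappa> q) 0 * r q e (\<not> d))"

lemma comb_flow_nonneg:
  "(\<And>q d. q \<in> Q \<Longrightarrow> r q e d \<ge> 0) \<Longrightarrow> comb_flow Q \<kappa> r e d \<ge> 0"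
  unfolding comb_flow_def by (intro sum_nonneg) auto

lemma edge_flow_comb_flow: "edge_flow (comb_flow Q \<kappa> r) e = (\<Sum>q\<in>Q. \<kappa> q * edge_flow (r q) e)"
proof -
  have split: "max k 0 * x + max (- k) 0 * y - (max k 0 * y + max (- k) 0 * x) = k * (x - y)"
    for k x y :: real
    by (cases "k \<ge> 0") (auto simp: algebra_simps)
  show ?thesis
    unfolding edge_flow_def comb_flow_def sum_subtractf[symmetric] by (simp add: split)
qed

lemma netout_comb_flow:
  "finite F \<Longrightarrow> netout F ep (comb_flow Q \<kappa> r) v = (\<Sum>q\<in>Q. \<kappa> q * netout F ep (r q) v)"
  by (simp add: netout_eq_sum_incidence edge_flow_comb_flow sum_distrib_left sum_distrib_right
      sum.swap[of _ F] mult.assoc)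

lemma load_comb_flow:
  "comb_flow Q \<kappa> r e True + comb_flow Q \<kappa> r e False = (\<Sum>q\<in>Q. \<bar>\<kappa> q\<bar> * (r q e True + r q e False))"
proof -
  have "max k 0 * x + max (- k) 0 * y + (max k 0 * y + max (- k) 0 * x) = \<bar>k\<bar> * (x + y)" for k x y :: real
    by (cases "k \<ge> 0") (auto simp: algebra_simps)
  then show ?thesis
    unfolding comb_flow_def sum.distrib[symmetric] by simp
qed

lemma bij_betw_pairs_containing:
  assumes "x \<in> X"
  shows "bij_betw (\<lambda>u. {x, u}) (X - {x}) {q \<in> pairs_of X. x \<in> q}"
proof (rule bij_betwI')
  fix u u' assume "u \<in> X - {x}" "u' \<in> X - {x}"
  then show "{x, u} = {x, u'} \<longleftrightarrow> u = u'" by (auto simp: doubleton_eq_iff)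
next
  fix u assume "u \<in> X - {x}"
  then show "{x, u} \<in> {q \<in> pairs_of X. x \<in> q}" using assms by (auto simp: pairs_of_def)
next
  fix q assume "q \<in> {q \<in> pairs_of X. x \<in> q}"
  then have "q \<subseteq> X" "card q = 2" "x \<in> q" by (auto simp: pairs_of_def)
  then obtain u where "q = {x, u}" "u \<noteq> x"
    by (auto simp: card_2_iff)
  then show "\<exists>u\<in>X - {x}. q = {x, u}"
    using \<open>q \<subseteq> X\<close> by auto
qed

text \<open>Each pair \<open>{a, b}\<close> contributes \<open>(f b - f a) y a + (f a - f b) y b\<close>; grouping the terms
  by the point \<open>x\<close>, balance turns \<open>\<Sum>u\<noteq>x. f u - f x\<close> into \<open>- |X| f x\<close>.\<close>

lemma sum_pairs_balanced:
  fixes f y :: "'a \<Rightarrow> real"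
  assumes "finite X" and balanced: "(\<Sum>x\<in>X. f x) = 0"
    and orient: "\<And>q. q \<in> pairs_of X \<Longrightarrow> q = {A q, B q} \<and> A q \<noteq> B q"
  shows "(\<Sum>q\<in>pairs_of X. (f (B q) - f (A q)) * (y (A q) - y (B q)))
    = - real (card X) * (\<Sum>x\<in>X. f x * y x)"
proof -
  let ?F = "\<lambda>q x. ((\<Sum>u\<in>q - {x}. f u) - f x) * y x"
  have pair: "(f (B q) - f (A q)) * (y (A q) - y (B q)) = (\<Sum>x\<in>q. ?F q x)" if "q \<in> pairs_of X" for q
  proof -
    have q: "q = {A q, B q}" "A q \<noteq> B q" using orient[OF that] by auto
    have "(\<Sum>x\<in>{A q, B q}. ?F q x) = ?F q (A q) + ?F q (B q)"
      using q(2) by simp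
    then have "(\<Sum>x\<in>q. ?F q x) = ?F q (A q) + ?F q (B q)"
      by (simp only: q(1)[symmetric])
    moreover have "q - {A q} = {B q}" "q - {B q} = {A q}" using q by auto
    ultimately show ?thesis by (simp add: algebra_simps)
  qed
  have point: "(\<Sum>q\<in>{q \<in> pairs_of X. x \<in> q}. ?F q x) = - real (card X) * (f x * y x)"
    if "x \<in> X" for x
  proof -
    have "(\<Sum>q\<in>{q \<in> pairs_of X. x \<in> q}. ?F q x) = (\<Sum>u\<in>X - {x}. ?F {x, u} x)"
      by (rule sum.reindex_bij_betw[OF bij_betw_pairs_containing[OF that], symmetric])
    also have "\<dots> = (\<Sum>u\<in>X - {x}. (f u - f x) * y x)"
      by (intro sum.cong) (auto simp: insert_Diff_if)
    also have "\<dots> = ((\<Sum>u\<in>X - {x}. f u) - real (card (X - {x})) * f x) * y x"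
      by (simp add: sum_distrib_right[symmetric] sum_subtractf)
    also have "(\<Sum>u\<in>X - {x}. f u) = - f x"
      using sum.remove[OF \<open>finite X\<close> that, of f] balanced by simp
    also have "real (card (X - {x})) = real (card X) - 1"
    proof -
      have "card X \<ge> 1" using \<open>finite X\<close> that by (simp add: Suc_le_eq card_gt_0_iff) blast
      then show ?thesis using \<open>finite X\<close> that by (simp add: of_nat_diff)
    qed
    finally show ?thesis by (simp add: algebra_simps)
  qed
  have "finite (pairs_of X)"
    using \<open>finite X\<close> by (simp add: pairs_of_def)
  then have "(\<Sum>q\<in>pairs_of X. \<Sum>x\<in>q. ?F q x) = (\<Sum>q\<in>pairs_of X. \<Sum>x\<in>{x \<in> X. x \<in> q}. ?F q x)"
    by (intro sum.cong refl) (auto simp: pairs_of_def)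
  also have "\<dots> = (\<Sum>x\<in>X. \<Sum>q\<in>{q \<in> pairs_of X. x \<in> q}. ?F q x)"
    using \<open>finite (pairs_of X)\<close> \<open>finite X\<close> by (rule sum.swap_restrict)
  finally have "(\<Sum>q\<in>pairs_of X. \<Sum>x\<in>q. ?F q x) = (\<Sum>x\<in>X. - real (card X) * (f x * y x))"
    using point by simp
  then show ?thesis
    using pair by (simp add: sum_distrib_left)
qed

text \<open>Weighting the router commodity \<open>{a, b}\<close> by \<open>w p b - w p a\<close> reproduces the boundary
  demand \<open>w p\<close> (by \<open>sum_pairs_balanced\<close>, the factor \<open>|out S|\<close> cancels the value
  \<open>1 / |out S|\<close> of the router commodities),
  and the weights of the commodities sum to at most \<open>2 c\<close>.\<close>

lemma router_flow_reroute:
  fixes w :: "'p \<Rightarrow> 'e \<Rightarrow> real"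
  assumes "finite E" "finite P" "router_flow k E ep S" "c \<ge> 0"
    and balanced: "\<And>p. p \<in> P \<Longrightarrow> (\<Sum>e\<in>out_edges E ep S. w p e) = 0"
    and bounded: "\<And>e. e \<in> out_edges E ep S \<Longrightarrow> (\<Sum>p\<in>P. \<bar>w p e\<bar>) \<le> c"
  obtains R :: "'p \<Rightarrow> 'e \<Rightarrow> bool \<Rightarrow> real" where
    "\<And>p e d. p \<in> P \<Longrightarrow> e \<in> inner_edges E ep S \<Longrightarrow> R p e d \<ge> 0"
    "\<And>p v. p \<in> P \<Longrightarrow> v \<in> S \<Longrightarrow> netout (inner_edges E ep S) ep (R p) v =
       - (\<Sum>e\<in>{e \<in> out_edges E ep S. inside_end ep S e = v}. w p e)"
    "\<And>e. e \<in> inner_edges E ep S \<Longrightarrow> (\<Sum>p\<in>P. R p e True + R p e False) \<le> 2 * c * k"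
proof -
  let ?Out = "out_edges E ep S" and ?I = "inner_edges E ep S"
  let ?Q = "pairs_of ?Out"
  define z where "z = real (card ?Out)"
  have "finite ?Out" "finite ?I" "finite ?Q"
    using \<open>finite E\<close> by (simp_all add: out_edges_def inner_edges_def pairs_of_def)
  obtain r where r_nonneg: "\<forall>q\<in>?Q. \<forall>e\<in>?I. \<forall>d. r q e d \<ge> 0"
    and r_conserve: "\<forall>q\<in>?Q. \<exists>a b. q = {a, b} \<and> a \<noteq> b \<and> (\<forall>v\<in>S. netout ?I ep (r q) v =
        (if v = inside_end ep S a then 1 / z else 0) - (if v = inside_end ep S b then 1 / z else 0))"
    and r_load: "\<forall>e\<in>?I. (\<Sum>q\<in>?Q. r q e True + r q e False) \<le> k"
    using \<open>router_flow k E ep S\<close> unfolding router_flow_def Let_def pairs_of_def z_def by blast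
  obtain A B where orient: "\<forall>q\<in>?Q. q = {A q, B q} \<and> A q \<noteq> B q \<and> (\<forall>v\<in>S. netout ?I ep (r q) v =
      (if v = inside_end ep S (A q) then 1 / z else 0) - (if v = inside_end ep S (B q) then 1 / z else 0))"
    using r_conserve by metis
  define \<kappa> where "\<kappa> p q = w p (B q) - w p (A q)" for p q
  define R where "R p = comb_flow ?Q (\<kappa> p) r" for p
  show thesis
  proof (rule that)
    show "R p e d \<ge> 0" if "e \<in> ?I" for p e d
      unfolding R_def using r_nonneg that by (intro comb_flow_nonneg) auto
  next
    fix p v assume "p \<in> P" "v \<in> S"
    let ?at_v = "\<lambda>x. if inside_end ep S x = v then 1 else 0 :: real"
    have "netout ?I ep (R p) v = (\<Sum>q\<in>?Q. \<kappa> p q * netout ?I ep (r q) v)"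
      unfolding R_def using \<open>finite ?I\<close> by (rule netout_comb_flow)
    also have "\<dots> = (\<Sum>q\<in>?Q. (w p (B q) - w p (A q)) * (?at_v (A q) - ?at_v (B q))) / z"
      unfolding sum_divide_distrib
    proof (intro sum.cong refl)
      fix q assume "q \<in> ?Q"
      then have "netout ?I ep (r q) v = (?at_v (A q) - ?at_v (B q)) / z"
        using orient \<open>v \<in> S\<close> by (auto simp: diff_divide_distrib)
      then show "\<kappa> p q * netout ?I ep (r q) v =
          (w p (B q) - w p (A q)) * (?at_v (A q) - ?at_v (B q)) / z"
        by (simp add: \<kappa>_def)
    qed
    also have "\<dots> = - z * (\<Sum>x\<in>?Out. w p x * ?at_v x) / z"
      unfolding z_def using \<open>finite ?Out\<close> balanced[OF \<open>p \<in> P\<close>] orient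
      by (subst sum_pairs_balanced) auto
    also have "\<dots> = - (\<Sum>e\<in>{e \<in> ?Out. inside_end ep S e = v}. w p e)"
      using \<open>finite ?Out\<close> by (cases "?Out = {}") (auto simp: z_def sum.inter_filter if_distrib cong: if_cong)
    finally show "netout ?I ep (R p) v = - (\<Sum>e\<in>{e \<in> ?Out. inside_end ep S e = v}. w p e)" .
  next
    fix e assume "e \<in> ?I"
    let ?load = "\<lambda>q. r q e True + r q e False"
    have weights: "(\<Sum>p\<in>P. \<bar>\<kappa> p q\<bar>) \<le> 2 * c" if "q \<in> ?Q" for q
    proof -
      have "A q \<in> ?Out" "B q \<in> ?Out" using orient that by (auto simp: pairs_of_def)
      then have "(\<Sum>p\<in>P. \<bar>w p (B q)\<bar> + \<bar>w p (A q)\<bar>) \<le> 2 * c"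
        using bounded[of "A q"] bounded[of "B q"] by (simp add: sum.distrib)
      moreover have "(\<Sum>p\<in>P. \<bar>\<kappa> p q\<bar>) \<le> (\<Sum>p\<in>P. \<bar>w p (B q)\<bar> + \<bar>w p (A q)\<bar>)"
        unfolding \<kappa>_def by (intro sum_mono) simp
      ultimately show ?thesis by linarith
    qed
    have "(\<Sum>p\<in>P. R p e True + R p e False) = (\<Sum>q\<in>?Q. (\<Sum>p\<in>P. \<bar>\<kappa> p q\<bar>) * ?load q)"
      unfolding R_def load_comb_flow by (simp add: sum.swap[of _ P] sum_distrib_right)
    also have "\<dots> \<le> (\<Sum>q\<in>?Q. 2 * c * ?load q)"
      using weights r_nonneg \<open>e \<in> ?I\<close> by (intro sum_mono mult_right_mono) auto
    also have "\<dots> \<le> 2 * c * k"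
      using r_load \<open>e \<in> ?I\<close> \<open>c \<ge> 0\<close> by (simp add: sum_distrib_left[symmetric] mult_left_mono)
    finally show "(\<Sum>p\<in>P. R p e True + R p e False) \<le> 2 * c * k" .
  qed
qed

section \<open>Expanding a routing of the contracted graph\<close>

lemma cls_eq:
  assumes "pairwise_disjoint C" "S \<in> C" "v \<in> S"
  shows "cls C v = S"
proof -
  have "(THE S. S \<in> C \<and> v \<in> S) = S"
    using assms by (intro the_equality) (auto simp: pairwise_disjoint_def)
  then show ?thesis
    using assms by (auto simp: cls_def)
qed

lemma cls_singleton: "v \<notin> \<Union>C \<Longrightarrow> cls C v = {v}"
  unfolding cls_def by auto

lemma mem_cls: "pairwise_disjoint C \<Longrightarrow> v \<in> cls C v"
  by (cases "v \<in> \<Union>C") (auto simp: cls_eq cls_singleton)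

lemma cls_eq_iff_mem: "pairwise_disjoint C \<Longrightarrow> S \<in> C \<Longrightarrow> cls C u = S \<longleftrightarrow> u \<in> S"
  using cls_eq mem_cls by metis

lemma cls_eq_singleton_iff: "pairwise_disjoint C \<Longrightarrow> v \<notin> \<Union>C \<Longrightarrow> cls C u = {v} \<longleftrightarrow> u = v"
  using cls_singleton mem_cls by (metis singletonD)

lemma out_edges_subset_contr_E:
  assumes "pairwise_disjoint C" "S \<in> C"
  shows "out_edges E ep S \<subseteq> contr_E C E ep"
  using cls_eq_iff_mem[OF assms] by (auto simp: out_edges_def contr_E_def dest: cls_eq[OF assms])

lemma inner_edges_disjoint_contr_E:
  "pairwise_disjoint C \<Longrightarrow> S \<in> C \<Longrightarrow> inner_edges E ep S \<inter> contr_E C E ep = {}"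
  by (auto simp: inner_edges_def contr_E_def cls_eq)

lemma netout_contr_router:
  assumes "finite E" "pairwise_disjoint C" "S \<in> C"
    and epH: "\<And>e. e \<in> contr_E C E ep \<Longrightarrow> epH e = contr_ep C ep e"
  shows "netout (contr_E C E ep) epH g S = (\<Sum>e\<in>out_edges E ep S. exit_flow ep S g e)"
proof -
  have "finite (contr_E C E ep)"
    using assms by (simp add: contr_E_def)
  have "netout (contr_E C E ep) epH g S = netout (contr_E C E ep) (contr_ep C ep) g S"
    using epH by (rule netout_cong_endpoints)
  also have "\<dots> = netout (out_edges E ep S) (contr_ep C ep) g S"
    using \<open>finite (contr_E C E ep)\<close> out_edges_subset_contr_E[OF assms(2,3)]
    by (rule netout_subset)
      (auto simp: out_edges_def contr_E_def contr_ep_def incidence_def cls_eq_iff_mem[OF assms(2,3)])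
  also have "\<dots> = (\<Sum>e\<in>out_edges E ep S. exit_flow ep S g e)"
    using assms by (simp add: netout_eq_sum_incidence out_edges_def contr_ep_def incidence_def
        exit_flow_def cls_eq_iff_mem) (rule sum.cong; auto)
  finally show ?thesis .
qed

lemma netout_contr_singleton:
  assumes "finite E" "pairwise_disjoint C" "v \<notin> \<Union>C"
    and epH: "\<And>e. e \<in> contr_E C E ep \<Longrightarrow> epH e = contr_ep C ep e"
  shows "netout E ep g v = netout (contr_E C E ep) epH g {v}"
proof -
  have cls_v: "cls C u = cls C v \<longleftrightarrow> u = v" for u
    using cls_eq_singleton_iff[OF assms(2,3)] by (simp add: cls_singleton[OF assms(3)])
  have "netout E ep g v = netout (contr_E C E ep) ep g v"
  proof (rule netout_subset)
    fix e assume "e \<in> E - contr_E C E ep"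
    then have "cls C (fst (ep e)) = cls C (snd (ep e))" by (simp add: contr_E_def)
    then show "incidence ep v e = 0" by (metis cls_v incidence_eq_0_iff)
  qed (use assms in \<open>auto simp: contr_E_def\<close>)
  also have "\<dots> = netout (contr_E C E ep) epH g {v}"
    using assms by (simp add: netout_eq_sum_incidence contr_E_def contr_ep_def incidence_def
        cls_eq_singleton_iff)
  finally show ?thesis .
qed

definition completes_inside :: "'e set \<Rightarrow> ('e \<Rightarrow> 'v \<times> 'v) \<Rightarrow> 'v set \<Rightarrow> 'p set \<Rightarrow>
    ('p \<Rightarrow> 'e \<Rightarrow> bool \<Rightarrow> real) \<Rightarrow> ('p \<Rightarrow> 'e \<Rightarrow> bool \<Rightarrow> real) \<Rightarrow> real \<Rightarrow> bool" where
  "completes_inside E ep S P g R b \<longleftrightarrow>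
    (\<forall>p\<in>P. \<forall>e\<in>inner_edges E ep S. \<forall>d. R p e d \<ge> 0) \<and>
    (\<forall>p\<in>P. \<forall>v\<in>S. netout (inner_edges E ep S) ep (R p) v = - netout (out_edges E ep S) ep (g p) v) \<and>
    (\<forall>e\<in>inner_edges E ep S. (\<Sum>p\<in>P. R p e True + R p e False) \<le> b)"

lemma routing_reroute_in_router:
  assumes "finite E" "finite T" "pairwise_disjoint C" "S \<in> C" "S \<subseteq> V - T"
    and "router_flow k E ep S" "c \<ge> 0"
    and epH: "\<And>e. e \<in> contr_E C E ep \<Longrightarrow> epH e = contr_ep C ep e"
    and h: "routing (contr_V C V) (contr_E C E ep) epH T (cls C) D c h"
  shows "\<exists>R. completes_inside E ep S (pairs_of T) h R (2 * c * k)"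
proof -
  let ?E' = "contr_E C E ep" and ?Out = "out_edges E ep S"
  have balanced: "(\<Sum>e\<in>?Out. exit_flow ep S (h p) e) = 0" if p: "p \<in> pairs_of T" for p
  proof (cases "S = {}")
    case True
    then show ?thesis by (simp add: out_edges_def)
  next
    case False
    then obtain v where "v \<in> S" by blast
    then have "S \<in> contr_V C V"
      using cls_eq[OF \<open>pairwise_disjoint C\<close> \<open>S \<in> C\<close>] \<open>S \<subseteq> V - T\<close> by (force simp: contr_V_def)
    then obtain a b where "p = {a, b}" and conserved:
      "netout ?E' epH (h p) S = (if S = cls C a then D p else 0) - (if S = cls C b then D p else 0)"
      using routing_conserve[OF h p] by metis
    moreover have "a \<notin> S" "b \<notin> S"
      using p \<open>p = {a, b}\<close> \<open>S \<subseteq> V - T\<close> by (auto simp: pairs_of_def)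
    ultimately show ?thesis
      using netout_contr_router[OF \<open>finite E\<close> \<open>pairwise_disjoint C\<close> \<open>S \<in> C\<close> epH]
        cls_eq_iff_mem[OF \<open>pairwise_disjoint C\<close> \<open>S \<in> C\<close>] by auto
  qed
  have bounded: "(\<Sum>p\<in>pairs_of T. \<bar>exit_flow ep S (h p) e\<bar>) \<le> c" if "e \<in> ?Out" for e
  proof -
    have "e \<in> ?E'"
      using out_edges_subset_contr_E[OF \<open>pairwise_disjoint C\<close> \<open>S \<in> C\<close>, of E ep] that by blast
    then have "(\<Sum>p\<in>pairs_of T. \<bar>exit_flow ep S (h p) e\<bar>) \<le> (\<Sum>p\<in>pairs_of T. h p e True + h p e False)"
      using routing_nonneg[OF h] by (intro sum_mono abs_exit_flow_le) auto
    also have "\<dots> \<le> c"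
      using routing_load[OF h \<open>e \<in> ?E'\<close>] .
    finally show ?thesis .
  qed
  have "finite (pairs_of T)"
    using \<open>finite T\<close> by (simp add: pairs_of_def)
  obtain R where
    "\<And>p e d. p \<in> pairs_of T \<Longrightarrow> e \<in> inner_edges E ep S \<Longrightarrow> R p e d \<ge> 0"
    and conserve: "\<And>p v. p \<in> pairs_of T \<Longrightarrow> v \<in> S \<Longrightarrow> netout (inner_edges E ep S) ep (R p) v =
       - (\<Sum>e\<in>{e \<in> ?Out. inside_end ep S e = v}. exit_flow ep S (h p) e)"
    and "\<And>e. e \<in> inner_edges E ep S \<Longrightarrow> (\<Sum>p\<in>pairs_of T. R p e True + R p e False) \<le> 2 * c * k"
    using router_flow_reroute[OF \<open>finite E\<close> \<open>finite (pairs_of T)\<close> \<open>router_flow k E ep S\<close> \<open>c \<ge> 0\<close>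
        balanced bounded] by blast
  moreover have "netout (inner_edges E ep S) ep (R p) v = - netout ?Out ep (h p) v"
    if "p \<in> pairs_of T" "v \<in> S" for p v
    using conserve[OF that] netout_out_edges[OF \<open>finite E\<close> \<open>v \<in> S\<close>] by simp
  ultimately show ?thesis
    unfolding completes_inside_def by blast
qed

definition glue_flow :: "'v set set \<Rightarrow> 'e set \<Rightarrow> ('e \<Rightarrow> 'v \<times> 'v) \<Rightarrow> ('e \<Rightarrow> bool \<Rightarrow> real) \<Rightarrow>
    ('v set \<Rightarrow> 'e \<Rightarrow> bool \<Rightarrow> real) \<Rightarrow> 'e \<Rightarrow> bool \<Rightarrow> real" where
  "glue_flow C E ep h R e d = (if e \<in> contr_E C E ep then h e d
     else if cls C (fst (ep e)) \<in> C then R (cls C (fst (ep e))) e d else 0)"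

lemma glue_flow_contr: "e \<in> contr_E C E ep \<Longrightarrow> glue_flow C E ep h R e d = h e d"
  by (simp add: glue_flow_def)

lemma glue_flow_inner:
  assumes "pairwise_disjoint C" "S \<in> C" "e \<in> inner_edges E ep S"
  shows "glue_flow C E ep h R e d = R S e d"
  using assms inner_edges_disjoint_contr_E[OF assms(1,2), of E ep] cls_eq[OF assms(1,2)]
  by (auto simp: glue_flow_def inner_edges_def)

lemma glue_flow_cases:
  assumes "pairwise_disjoint C" "e \<in> E"
  obtains "e \<in> contr_E C E ep" | S where "S \<in> C" "e \<in> inner_edges E ep S"
    | "\<forall>h R d. glue_flow C E ep h R e d = 0"
proof (cases "e \<in> contr_E C E ep")
  case True
  then show ?thesis by (rule that(1))
next
  case not_contr: False
  show ?thesis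
  proof (cases "cls C (fst (ep e)) \<in> C")
    case True
    moreover have "cls C (snd (ep e)) = cls C (fst (ep e))"
      using assms not_contr by (simp add: contr_E_def)
    ultimately have "e \<in> inner_edges E ep (cls C (fst (ep e)))"
      using assms mem_cls[OF assms(1)] by (metis (mono_tags, lifting) inner_edges_def mem_Collect_eq)
    then show ?thesis
      using that(2) \<open>cls C (fst (ep e)) \<in> C\<close> by blast
  next
    case False
    then show ?thesis
      using that(3) not_contr by (simp add: glue_flow_def)
  qed
qed

lemma netout_glue_flow_router:
  assumes "finite E" "pairwise_disjoint C" "S \<in> C" "v \<in> S"
  shows "netout E ep (glue_flow C E ep h R) v =
    netout (out_edges E ep S) ep h v + netout (inner_edges E ep S) ep (R S) v"
proof -
  have "netout E ep (glue_flow C E ep h R) v = netout (out_edges E ep S) ep (glue_flow C E ep h R) v +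
      netout (inner_edges E ep S) ep (glue_flow C E ep h R) v"
    using assms(1,4) by (rule netout_split_out_inner)
  also have "\<dots> = netout (out_edges E ep S) ep h v + netout (inner_edges E ep S) ep (R S) v"
    using glue_flow_contr[OF subsetD[OF out_edges_subset_contr_E[OF assms(2,3)]]]
      glue_flow_inner[OF assms(2,3)] by (intro arg_cong2[where f = "(+)"] netout_cong)
  finally show ?thesis .
qed

lemma netout_glue_flow_outside:
  assumes "finite E" "pairwise_disjoint C" "v \<notin> \<Union>C"
    and "\<And>e. e \<in> contr_E C E ep \<Longrightarrow> epH e = contr_ep C ep e"
  shows "netout E ep (glue_flow C E ep h R) v = netout (contr_E C E ep) epH h {v}"
proof -
  have "netout E ep (glue_flow C E ep h R) v = netout (contr_E C E ep) epH (glue_flow C E ep h R) {v}"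
    using assms by (rule netout_contr_singleton)
  also have "\<dots> = netout (contr_E C E ep) epH h {v}"
    by (rule netout_cong) (simp add: glue_flow_contr)
  finally show ?thesis .
qed

lemma routing_glue_flow:
  assumes "finite E" "pairwise_disjoint C" "T \<inter> \<Union>C = {}" "c \<ge> 0" "1 \<le> 2 * k"
    and epH: "\<And>e. e \<in> contr_E C E ep \<Longrightarrow> epH e = contr_ep C ep e"
    and h: "routing (contr_V C V) (contr_E C E ep) epH T (cls C) D c h"
    and RR: "\<And>S. S \<in> C \<Longrightarrow> completes_inside E ep S (pairs_of T) h (RR S) (2 * c * k)"
  shows "routing V E ep T id D (2 * c * k) (\<lambda>p. glue_flow C E ep (h p) (\<lambda>S. RR S p))"
  unfolding routing_def
proof (intro conjI ballI allI)
  fix p e d assume "p \<in> pairs_of T" "e \<in> E"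
  then show "glue_flow C E ep (h p) (\<lambda>S. RR S p) e d \<ge> 0"
    using routing_nonneg[OF h] RR
    by (cases rule: glue_flow_cases[OF \<open>pairwise_disjoint C\<close> \<open>e \<in> E\<close>, where ep = ep])
      (auto simp: glue_flow_contr glue_flow_inner[OF \<open>pairwise_disjoint C\<close>] completes_inside_def)
next
  fix e assume "e \<in> E"
  have "c \<le> 2 * c * k"
    using \<open>c \<ge> 0\<close> \<open>1 \<le> 2 * k\<close> mult_left_mono[of 1 "2 * k" c] by simp
  with \<open>c \<ge> 0\<close> show "(\<Sum>p\<in>pairs_of T. glue_flow C E ep (h p) (\<lambda>S. RR S p) e True +
      glue_flow C E ep (h p) (\<lambda>S. RR S p) e False) \<le> 2 * c * k"
    using routing_load[OF h] RR
    by (cases rule: glue_flow_cases[OF \<open>pairwise_disjoint C\<close> \<open>e \<in> E\<close>, where ep = ep])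
      (auto simp: glue_flow_contr glue_flow_inner[OF \<open>pairwise_disjoint C\<close>] completes_inside_def
        intro: order_trans)
next
  fix p assume "p \<in> pairs_of T"
  then obtain a b where "p = {a, b}" "a \<noteq> b" and conserved: "\<And>W. W \<in> contr_V C V \<Longrightarrow>
      netout (contr_E C E ep) epH (h p) W = (if W = cls C a then D p else 0) - (if W = cls C b then D p else 0)"
    using routing_conserve[OF h] by metis
  have "a \<in> T" "b \<in> T"
    using \<open>p \<in> pairs_of T\<close> \<open>p = {a, b}\<close> by (auto simp: pairs_of_def)
  have "netout E ep (glue_flow C E ep (h p) (\<lambda>S. RR S p)) v =
      (if v = a then D p else 0) - (if v = b then D p else 0)" if "v \<in> V" for v
  proof (cases "v \<in> \<Union>C")
    case True
    then obtain S where "S \<in> C" "v \<in> S" by blast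
    then have "v \<noteq> a" "v \<noteq> b"
      using \<open>T \<inter> \<Union>C = {}\<close> \<open>a \<in> T\<close> \<open>b \<in> T\<close> by auto
    then show ?thesis
      using netout_glue_flow_router[OF \<open>finite E\<close> \<open>pairwise_disjoint C\<close> \<open>S \<in> C\<close> \<open>v \<in> S\<close>]
        RR[OF \<open>S \<in> C\<close>] \<open>p \<in> pairs_of T\<close> \<open>v \<in> S\<close> by (simp add: completes_inside_def)
  next
    case False
    have "{v} \<in> contr_V C V"
      using \<open>v \<in> V\<close> cls_singleton[OF False] by (force simp: contr_V_def)
    moreover have "{v} = cls C a \<longleftrightarrow> v = a" "{v} = cls C b \<longleftrightarrow> v = b"
      by (metis cls_eq_singleton_iff[OF \<open>pairwise_disjoint C\<close> False])+
    moreover have "netout E ep (glue_flow C E ep (h p) (\<lambda>S. RR S p)) v =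
        netout (contr_E C E ep) epH (h p) {v}"
      using \<open>finite E\<close> \<open>pairwise_disjoint C\<close> False epH by (rule netout_glue_flow_outside)
    ultimately show ?thesis
      by (simp add: conserved)
  qed
  then show "\<exists>a b. p = {a, b} \<and> a \<noteq> b \<and> (\<forall>v\<in>V. netout E ep (glue_flow C E ep (h p) (\<lambda>S. RR S p)) v =
      (if v = id a then D p else 0) - (if v = id b then D p else 0))"
    using \<open>p = {a, b}\<close> \<open>a \<noteq> b\<close> unfolding id_def by blast
qed

lemma routable_contracted:
  assumes "multigraph V E ep" "T \<subseteq> V"
    and "\<And>e. e \<in> contr_E C E ep \<Longrightarrow> epH e = contr_ep C ep e"
    and "routable V E ep T id D c"
  shows "routable (contr_V C V) (contr_E C E ep) epH T (cls C) D c"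
proof -
  obtain g where "routing V E ep T id D c g"
    using assms(4) unfolding routable_iff_routing ..
  then have "routing (cls C ` V) (contr_E C E ep) epH T (cls C) D c g"
    using assms(1-3) by (intro routing_quotient[where E = E and ep = ep])
      (auto simp: multigraph_def contr_E_def contr_ep_def)
  then show ?thesis
    unfolding contr_V_def routable_iff_routing by blast
qed

lemma routable_uncontracted:
  assumes "multigraph V E ep" "T \<subseteq> V" "pairwise_disjoint C"
    and routers: "\<And>S. S \<in> C \<Longrightarrow> S \<subseteq> V - T \<and> router_flow k E ep S" and "1 \<le> 2 * k"
    and epH: "\<And>e. e \<in> contr_E C E ep \<Longrightarrow> epH e = contr_ep C ep e"
    and "c \<ge> 0" and "routable (contr_V C V) (contr_E C E ep) epH T (cls C) D c"
  shows "routable V E ep T id D (2 * k * c)"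
proof -
  obtain h where h: "routing (contr_V C V) (contr_E C E ep) epH T (cls C) D c h"
    using assms(8) unfolding routable_iff_routing ..
  have "finite V" "finite E"
    using \<open>multigraph V E ep\<close> by (simp_all add: multigraph_def)
  have "finite T"
    using \<open>finite V\<close> \<open>T \<subseteq> V\<close> by (rule finite_subset[rotated])
  have "\<forall>S\<in>C. \<exists>R. completes_inside E ep S (pairs_of T) h R (2 * c * k)"
  proof
    fix S assume "S \<in> C"
    with routers show "\<exists>R. completes_inside E ep S (pairs_of T) h R (2 * c * k)"
      by (intro routing_reroute_in_router[OF \<open>finite E\<close> \<open>finite T\<close> \<open>pairwise_disjoint C\<close> \<open>S \<in> C\<close>
            _ _ \<open>c \<ge> 0\<close> epH h]) auto
  qed
  then obtain RR where "\<forall>S\<in>C. completes_inside E ep S (pairs_of T) h (RR S) (2 * c * k)"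
    by (rule bchoice[THEN exE])
  moreover have "T \<inter> \<Union>C = {}"
    using routers by blast
  ultimately have "routing V E ep T id D (2 * c * k) (\<lambda>p. glue_flow C E ep (h p) (\<lambda>S. RR S p))"
    using \<open>finite E\<close> \<open>pairwise_disjoint C\<close> \<open>c \<ge> 0\<close> \<open>1 \<le> 2 * k\<close> epH h
    by (intro routing_glue_flow) auto
  then show ?thesis
    unfolding routable_iff_routing by (auto simp: ac_simps)
qed

lemma le_mult_INF_ennreal:
  fixes X k :: ennreal
  assumes "k \<noteq> 0" "k \<noteq> top" and "\<And>c. c \<in> A \<Longrightarrow> X \<le> k * f c"
  shows "X \<le> k * (INF c\<in>A. f c)"
proof -
  have "X / k \<le> (INF c\<in>A. f c)"
  proof (rule INF_greatest)
    fix c assume "c \<in> A"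
    then have "X / k \<le> k * f c / k"
      by (intro divide_right_mono_ennreal assms(3))
    also have "\<dots> = f c"
      using assms(1,2) by (simp add: mult.commute[of k] mult_divide_eq_ennreal)
    finally show "X / k \<le> f c" .
  qed
  then have "k * (X / k) \<le> k * (INF c\<in>A. f c)"
    by (rule mult_left_mono) simp
  moreover have "k * (X / k) = X"
    using assms(1,2) by (simp add: ennreal_times_divide mult.commute[of k] mult_divide_eq_ennreal)
  ultimately show ?thesis by simp
qed

lemma eta_antimono:
  assumes "\<And>c. c \<ge> 0 \<Longrightarrow> routable V E ep T \<iota> D c \<Longrightarrow> routable V' E' ep' T \<iota>' D c"
  shows "eta V' E' ep' T \<iota>' D \<le> eta V E ep T \<iota> D"
  unfolding eta_def using assms by (intro INF_superset_mono) auto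

lemma eta_le_scaled:
  assumes "k > 0"
    and "\<And>c. c \<ge> 0 \<Longrightarrow> routable V' E' ep' T \<iota>' D c \<Longrightarrow> routable V E ep T \<iota> D (k * c)"
  shows "eta V E ep T \<iota> D \<le> ennreal k * eta V' E' ep' T \<iota>' D"
  unfolding eta_def[of V' E' ep' T \<iota>' D]
proof (rule le_mult_INF_ennreal)
  fix c assume c: "c \<in> {c. c \<ge> 0 \<and> routable V' E' ep' T \<iota>' D c}"
  then have "k * c \<in> {c. c \<ge> 0 \<and> routable V E ep T \<iota> D c}"
    using assms by auto
  then have "eta V E ep T \<iota> D \<le> ennreal (k * c)"
    unfolding eta_def by (rule INF_lower)
  then show "eta V E ep T \<iota> D \<le> ennreal k * ennreal c"
    using \<open>k > 0\<close> c by (simp add: ennreal_mult)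
qed (use \<open>k > 0\<close> in auto)

lemma inj_on_cls:
  assumes "T \<inter> \<Union>C = {}"
  shows "inj_on (cls C) T"
proof (rule inj_onI)
  fix s t assume "s \<in> T" "t \<in> T" "cls C s = cls C t"
  with assms show "s = t"
    using cls_singleton[of s C] cls_singleton[of t C] by auto
qed

theorem claim1:
  fixes V :: "'v set" and E :: "'e set" and ep :: "'e \<Rightarrow> 'v \<times> 'v" and T :: "'v set"
    and V' :: "'v set set" and E' :: "'e set" and ep' :: "'e \<Rightarrow> 'v set \<times> 'v set"
  assumes "multigraph V E ep"
    and "T \<subseteq> V"
    and "legal_contracted V E ep T V' E' ep'"
  shows "restricted_flow_sparsifier V E ep T V' E' ep' 68"
proof -
  obtain C where "pairwise_disjoint C" and good: "\<forall>S\<in>C. good_router V E ep T S"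
    and V': "V' = contr_V C V" and E': "E' = contr_E C E ep" and ep': "\<forall>e\<in>E'. ep' e = contr_ep C ep e"
    using assms(3) unfolding legal_contracted_def by blast
  have routers: "S \<subseteq> V - T \<and> router_flow 34 E ep S" if "S \<in> C" for S
    using good that by (simp add: good_router_def)
  have "flow_sparsifier V E ep T V' E' ep' (cls C) 68"
    unfolding flow_sparsifier_def
  proof (intro conjI allI impI)
    show "inj_on (cls C) T"
      using routers by (intro inj_on_cls) blast
    show "cls C ` T \<subseteq> V'"
      using assms(2) by (auto simp: V' contr_V_def)
    show "eta V' E' ep' T (cls C) D \<le> eta V E ep T id D" for D
      using assms(1,2) ep' unfolding V' E' by (intro eta_antimono routable_contracted) auto
    show "eta V E ep T id D \<le> 68 * eta V' E' ep' T (cls C) D" for D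
      using routable_uncontracted[OF assms(1,2) \<open>pairwise_disjoint C\<close> routers, of ep'] ep'
      unfolding V' E' by (intro eta_le_scaled[of "2 * 34", simplified]) auto
  qed
  then show ?thesis
    unfolding restricted_flow_sparsifier_def using \<open>pairwise_disjoint C\<close> routers V' E' ep'
    by (intro exI[of _ C]) auto
qed

end
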